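(* Let $(Z_t)$ be a branching process on $[0,\infty]$ and $(v_{s,t})_{(s,t)\in\Delta}$ its Laplace exponents. The following are equivalent: (a) $v_{s,t}\in\mathcal{BF}_\infty$ for all $(s,t)\in\Delta$; (b) for all $0\le s\le t\le u$ and $x>0$, $\mathbb P^{(s,x)}[Z_t\le Z_u]=1$; (c) for all $(s,t)\in\Delta$ and $x>0$, $\mathbb P^{(s,x)}[Z_t\ge x]=1$; (d) for every $(s,t)\in\Delta$ there exists $x>0$ with $\mathbb P^{(s,x)}[Z_t\ge x]=1$.
   Context: $\Delta=\{(s,t):0\le s\le t\}$, $\mathbb H=\{\operatorname{Re}\zeta>0\}$. A branching process on $[0,\infty]$ is a Markov family $(Z_t)$ with probability measures $\mathbb P^{(s,x)}$ ($\mathbb P^{(s,x)}[Z_s=x]=1$ and $\mathbb E^{(s,x)}[f(Z_u)|\mathcal F_{[s,t]}]=\int f(y)k_{t,u}(Z_t,\mathrm dy)$ a.s.) whose transition kernels $(k_{s,t})$ on $[0,\infty]$ satisfy $k_{s,s}(x,\cdot)=\delta_x$, $k_{s,t}\star k_{t,u}=k_{s,u}$ with $(k\star l)(x,B)=\int l(y,B)k(x,\mathrm dy)$, weak continuity of $(s,t,x)\mapsto k_{s,t}(x,\cdot)$ on $\Delta\times[0,\infty)$, $k_{s,t}(x,\cdot)\ast k_{s,t}(y,\cdot)=k_{s,t}(x+y,\cdot)$, $k_{s,t}(0,\cdot)=\delta_0$, $k_{s,t}(\infty,\cdot)=\delta_\infty$. Laplace exponents: Bernstein functions $v_{s,t}$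 with $\int_{[0,\infty)}e^{-\theta y}k_{s,t}(x,\mathrm dy)=e^{-xv_{s,t}(\theta)}$ ($x,\theta>0$), extended holomorphically to $\mathbb H$. $\mathcal{BF}$: Bernstein functions not identically zero (self-maps of $\mathbb H$). Denjoy–Wolff point of $v\in{\sf Hol}(\mathbb H,\mathbb H)$ (not ${\rm id}$, not an elliptic automorphism): unique $\tau\in\overline{\mathbb H}\cup\{\infty\}$ with $v^{\circ n}\to\tau$ locally uniformly. $\mathcal{BF}_\infty$: ${\rm id}_{\mathbb H}$ together with all $v\in\mathcal{BF}\setminus\{{\rm id}\}$ with Denjoy–Wolff point $\infty$. *)

theory Defs
  imports "HOL-Probability.Probability" "HOL-Complex_Analysis.Complex_Analysis"
begin

definition rhp :: "complex set" where
  "rhp = {z. Re z > 0}"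

definition conv_enn :: "ennreal measure \<Rightarrow> ennreal measure \<Rightarrow> ennreal measure" where
  "conv_enn M N = distr (M \<Otimes>\<^sub>M N) borel (\<lambda>(a, b). a + b)"

definition nat_filt :: "'w measure \<Rightarrow> (real \<Rightarrow> 'w \<Rightarrow> ennreal) \<Rightarrow> real \<Rightarrow> real \<Rightarrow> 'w measure" where
  "nat_filt M Z s t = sigma (space M)
     (\<Union>r\<in>{s..t}. {Z r -` B \<inter> space M | B. B \<in> sets (borel :: ennreal measure)})"

definition branching_kernels :: "(real \<Rightarrow> real \<Rightarrow> ennreal \<Rightarrow> ennreal measure) \<Rightarrow> bool" where
  "branching_kernels k \<longleftrightarrow>
     (\<forall>s t x. 0 \<le> s \<and> s \<le> t \<longrightarrow> prob_space (k s t x) \<and> sets (k s t x) = sets borel)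
   \<and> (\<forall>s t B. 0 \<le> s \<and> s \<le> t \<and> B \<in> sets borel \<longrightarrow>
        (\<lambda>x. emeasure (k s t x) B) \<in> borel_measurable borel)
   \<and> (\<forall>s x. 0 \<le> s \<longrightarrow> k s s x = return borel x)
   \<and> (\<forall>s t u x B. 0 \<le> s \<and> s \<le> t \<and> t \<le> u \<and> B \<in> sets borel \<longrightarrow>
        emeasure (k s u x) B = (\<integral>\<^sup>+ y. emeasure (k t u y) B \<partial>(k s t x)))
   \<and> (\<forall>f :: ennreal \<Rightarrow> real. continuous_on UNIV f \<longrightarrow>
        continuous_on {(s, t, x). 0 \<le> s \<and> s \<le> t \<and> x < \<infinity>}
          (\<lambda>(s, t, x). \<integral>y. f y \<partial>(k s t x)))
   \<and> (\<forall>s t x y. 0 \<le> s \<and> s \<le> t \<longrightarrow> conv_enn (k s t x) (k s t y) = k s t (x + y))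
   \<and> (\<forall>s t. 0 \<le> s \<and> s \<le> t \<longrightarrow> k s t 0 = return borel 0 \<and> k s t \<infinity> = return borel \<infinity>)"

definition branching_process ::
  "(real \<Rightarrow> ennreal \<Rightarrow> 'w measure) \<Rightarrow> (real \<Rightarrow> 'w \<Rightarrow> ennreal)
   \<Rightarrow> (real \<Rightarrow> real \<Rightarrow> ennreal \<Rightarrow> ennreal measure) \<Rightarrow> bool" where
  "branching_process P Z k \<longleftrightarrow>
     branching_kernels k
   \<and> (\<forall>s x. 0 \<le> s \<longrightarrow> prob_space (P s x))
   \<and> (\<forall>s x r. 0 \<le> s \<and> s \<le> r \<longrightarrow> Z r \<in> borel_measurable (P s x))
   \<and> (\<forall>s x. 0 \<le> s \<longrightarrow> (AE \<omega> in P s x. Z s \<omega> = x))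
   \<and> (\<forall>s t u x (f :: ennreal \<Rightarrow> real). 0 \<le> s \<and> s \<le> t \<and> t \<le> u
        \<and> f \<in> borel_measurable borel \<and> bounded (range f) \<longrightarrow>
        (AE \<omega> in P s x.
           real_cond_exp (P s x) (nat_filt (P s x) Z s t) (\<lambda>\<omega>. f (Z u \<omega>)) \<omega>
           = (\<integral>y. f y \<partial>(k t u (Z t \<omega>)))))"

definition laplace_exponents ::
  "(real \<Rightarrow> real \<Rightarrow> ennreal \<Rightarrow> ennreal measure) \<Rightarrow> (real \<Rightarrow> real \<Rightarrow> complex \<Rightarrow> complex) \<Rightarrow> bool" where
  "laplace_exponents k v \<longleftrightarrow>
     (\<forall>s t. 0 \<le> s \<and> s \<le> t \<longrightarrow> v s t holomorphic_on rhp
        \<and> (\<forall>x \<theta> :: real. 0 < x \<and> 0 < \<theta> \<longrightarrow>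
             complex_of_real (\<integral>y. indicator {..<\<infinity>} y * exp (- \<theta> * enn2real y) \<partial>(k s t (ennreal x)))
             = exp (- complex_of_real x * v s t (complex_of_real \<theta>))))"

definition bernstein :: "(real \<Rightarrow> real) \<Rightarrow> bool" where
  "bernstein f \<longleftrightarrow>
     (\<forall>x>0. 0 \<le> f x)
   \<and> (\<forall>n x. 0 < x \<longrightarrow> (deriv ^^ n) f field_differentiable (at x))
   \<and> (\<forall>n x. 1 \<le> n \<and> 0 < x \<longrightarrow> 0 \<le> (-1) ^ (n - 1) * (deriv ^^ n) f x)"

definition BF :: "(complex \<Rightarrow> complex) \<Rightarrow> bool" where
  "BF v \<longleftrightarrow> v holomorphic_on rhp
     \<and> (\<forall>x>0. v (complex_of_real x) \<in> \<real>)
     \<and> bernstein (\<lambda>x. Re (v (complex_of_real x)))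
     \<and> (\<exists>z\<in>rhp. v z \<noteq> 0)"

definition DW_infinity :: "(complex \<Rightarrow> complex) \<Rightarrow> bool" where
  "DW_infinity v \<longleftrightarrow>
     (\<forall>K. compact K \<and> K \<subseteq> rhp \<longrightarrow>
        (\<forall>R. eventually (\<lambda>n. \<forall>z\<in>K. R \<le> norm ((v ^^ n) z)) sequentially))"

definition BF_inf :: "(complex \<Rightarrow> complex) \<Rightarrow> bool" where
  "BF_inf v \<longleftrightarrow> (\<forall>z\<in>rhp. v z = z)
     \<or> (BF v \<and> \<not> (\<forall>z\<in>rhp. v z = z) \<and> DW_infinity v)"

end

theory Submission
  imports Defs "HOL-Real_Asymp.Real_Asymp"
begin

text \<open>
  For \<open>x > 0\<close> the Laplace transform of \<open>k s t x\<close> is \<open>exp (- x V \<theta>)\<close>, where \<open>V\<close> is \<open>v s t\<close> on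
  the positive axis. By a Chernoff bound, \<open>k s t x\<close> has no mass below \<open>x\<close> iff
  \<open>exp (- x V \<theta>) \<le> exp (- x \<theta>)\<close> for all \<open>\<theta> > 0\<close>, i.e. iff \<open>V \<ge> id\<close>, a condition that does not
  depend on \<open>x\<close>; and that mass is \<open>P s x [Z t < x]\<close>. So (a), (c) and (d) are equivalent once
  \<open>V \<ge> id\<close> is shown to be equivalent to \<open>v s t \<in> BF\<^sub>\<infinity>\<close>.

  For the latter, \<open>V\<close> is a Bernstein function, being the limit of
  \<open>n (1 - L\<^sub>1\<^sub>/\<^sub>n)\<close> for the completely monotone Laplace transforms \<open>L\<^sub>x\<close> of \<open>k s t x\<close>. If
  \<open>V \<theta> < \<theta>\<close>, the iterates of \<open>\<theta>\<close> stay in \<open>(0, \<theta>]\<close>. If \<open>V \<ge> id\<close>, the iterates increase and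
  either diverge or converge to a fixed point \<open>L\<close>, where concavity forces \<open>V = id\<close> on \<open>(0, L)\<close>.
  Divergence spreads to the half-plane because \<open>Re (v z) \<ge> V (Re z)\<close>, which is the bound
  \<open>|L\<^sub>1 z| \<le> L\<^sub>1 (Re z)\<close> for the analytically continued Laplace transform.

  Finally (c) implies (b) by the Markov property at time \<open>t\<close>: for rational \<open>q\<close>,
  \<open>P[Z u < q < Z t] = E[1{Z t > q} k t u (Z t) [0, q)] = 0\<close>; and (b) implies (c) as \<open>Z s = x\<close> a.s.
\<close>

section \<open>Forward differences and Bernstein functions\<close>

primrec forward_diff :: "real \<Rightarrow> nat \<Rightarrow> (real \<Rightarrow> real) \<Rightarrow> real \<Rightarrow> real" where
  "forward_diff h 0 f x = f x"
| "forward_diff h (Suc n) f x = forward_diff h n f (x + h) - forward_diff h n f x"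

lemma forward_diff_Suc_shift:
  "forward_diff h (Suc n) f x = forward_diff h n (\<lambda>y. f (y + h) - f y) x"
proof (induction n arbitrary: x)
  case (Suc n)
  have "forward_diff h (Suc (Suc n)) f x = forward_diff h (Suc n) f (x + h) - forward_diff h (Suc n) f x"
    by (rule forward_diff.simps(2))
  also have "\<dots> = forward_diff h n (\<lambda>y. f (y + h) - f y) (x + h) - forward_diff h n (\<lambda>y. f (y + h) - f y) x"
    by (simp only: Suc.IH)
  also have "\<dots> = forward_diff h (Suc n) (\<lambda>y. f (y + h) - f y) x"
    by (rule forward_diff.simps(2)[symmetric])
  finally show ?case .
qed simp

lemma forward_diff_linear:
  "forward_diff h n (\<lambda>y. a * f y + b * g y) x = a * forward_diff h n f x + b * forward_diff h n g x"
  by (induction n arbitrary: x) (auto simp: algebra_simps)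

lemma forward_diff_const:
  assumes "0 < n"
  shows "forward_diff h n (\<lambda>y. c) x = 0"
proof -
  obtain m where "n = Suc m" using assms by (cases n) auto
  moreover have "forward_diff h m (\<lambda>y. 0) x = 0" for m x by (induction m arbitrary: x) simp_all
  ultimately show ?thesis using forward_diff_Suc_shift[of h m "\<lambda>y. c"] by simp
qed

lemma forward_diff_scaled_complement:
  assumes "0 < n"
  shows "forward_diff h n (\<lambda>y. a * (1 - f y)) x = - a * forward_diff h n f x"
proof -
  have "forward_diff h n (\<lambda>y. a * (1 - f y)) x = forward_diff h n (\<lambda>y. a * 1 + (- a) * f y) x"
    by (simp add: algebra_simps)
  also have "\<dots> = a * forward_diff h n (\<lambda>_. 1) x + (- a) * forward_diff h n f x"
    by (rule forward_diff_linear)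
  finally show ?thesis using forward_diff_const[OF assms] by simp
qed

lemma tendsto_forward_diff:
  assumes "\<And>y. x \<le> y \<Longrightarrow> (\<lambda>m. f m y) \<longlonglongrightarrow> g y" and "0 \<le> h"
  shows "(\<lambda>m. forward_diff h n (f m) x) \<longlonglongrightarrow> forward_diff h n g x"
  using assms(1)
proof (induction n arbitrary: x)
  case (Suc n)
  have "(\<lambda>m. forward_diff h n (f m) (x + h)) \<longlonglongrightarrow> forward_diff h n g (x + h)"
    by (rule Suc.IH) (use Suc.prems assms(2) in auto)
  moreover have "(\<lambda>m. forward_diff h n (f m) x) \<longlonglongrightarrow> forward_diff h n g x"
    by (rule Suc.IH) (use Suc.prems in auto)
  ultimately show ?case by (simp add: tendsto_diff)
qed simp

lemma forward_diff_mean_value: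
  assumes "0 < h" "a < \<theta>"
    and "\<And>j x. j < n \<Longrightarrow> a < x \<Longrightarrow> (D j has_real_derivative D (Suc j) x) (at x)"
  shows "\<exists>\<xi>. \<theta> \<le> \<xi> \<and> \<xi> \<le> \<theta> + real n * h \<and> forward_diff h n (D 0) \<theta> = h ^ n * D n \<xi>"
  using assms(3)
proof (induction n arbitrary: D)
  case (Suc n)
  define E where "E j x = D j (x + h) - D j x" for j x
  have "(E j has_real_derivative E (Suc j) x) (at x)" if "j < n" "a < x" for j x
  proof -
    have shifted: "((\<lambda>y. D j (y + h)) has_real_derivative D (Suc j) (x + h)) (at x)"
      using Suc.prems[of j "x + h"] that assms(1) DERIV_shift by auto
    show ?thesis unfolding E_def
      by (rule derivative_eq_intros shifted Suc.prems)+ (use that in auto)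
  qed
  then obtain \<xi> where \<xi>: "\<theta> \<le> \<xi>" "\<xi> \<le> \<theta> + real n * h" "forward_diff h n (E 0) \<theta> = h ^ n * E n \<xi>"
    using Suc.IH[of E] by blast
  obtain \<zeta> where \<zeta>: "\<xi> < \<zeta>" "\<zeta> < \<xi> + h" "D n (\<xi> + h) - D n \<xi> = h * D (Suc n) \<zeta>"
    using MVT2[of \<xi> "\<xi> + h" "D n" "D (Suc n)"] Suc.prems[of n] assms \<xi> by auto
  have "forward_diff h (Suc n) (D 0) \<theta> = forward_diff h n (E 0) \<theta>"
    unfolding forward_diff_Suc_shift E_def by simp
  also have "\<dots> = h ^ Suc n * D (Suc n) \<zeta>" using \<xi> \<zeta> unfolding E_def by simp
  finally show ?case using \<xi> \<zeta> by (intro exI[of _ \<zeta>]) (auto simp: algebra_simps)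
qed auto

lemma derivative_sign_if_forward_diff_sign:
  assumes deriv: "\<And>j x. a < x \<Longrightarrow> (D j has_real_derivative D (Suc j) x) (at x)"
    and \<theta>: "a < \<theta>"
    and sign: "\<And>h. 0 < h \<Longrightarrow> 0 \<le> c * forward_diff h n (D 0) \<theta>"
  shows "0 \<le> c * D n \<theta>"
proof (rule ccontr)
  assume "\<not> 0 \<le> c * D n \<theta>"
  then have neg: "0 < - (c * D n \<theta>)" by simp
  have "isCont (\<lambda>y. c * D n y) \<theta>"
    using DERIV_isCont[OF deriv[OF \<theta>]] by (intro continuous_intros)
  then obtain \<delta> where "0 < \<delta>" and near: "\<And>y. dist y \<theta> < \<delta> \<Longrightarrow> dist (c * D n y) (c * D n \<theta>) < - (c * D n \<theta>)"
    unfolding continuous_at_eps_delta using neg by blast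
  then have \<delta>: "0 < \<delta>" "\<And>y. dist y \<theta> < \<delta> \<Longrightarrow> c * D n y < 0"
    by (auto simp: dist_real_def abs_less_iff dest!: near)
  define h where "h = \<delta> / (real n + 1)"
  have h: "0 < h" "real n * h < \<delta>" using \<delta>(1) by (auto simp: h_def field_simps)
  obtain \<xi> where \<xi>: "\<theta> \<le> \<xi>" "\<xi> \<le> \<theta> + real n * h" "forward_diff h n (D 0) \<theta> = h ^ n * D n \<xi>"
    using forward_diff_mean_value[of h a \<theta> n D] h \<theta> deriv by blast
  have "c * D n \<xi> < 0" using \<delta>(2)[of \<xi>] \<xi> h by (simp add: dist_real_def)
  then have "h ^ n * (c * D n \<xi>) < 0" using h(1) by (simp add: mult_pos_neg)
  moreover have "c * forward_diff h n (D 0) \<theta> = h ^ n * (c * D n \<xi>)"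
    using \<xi>(3) by (simp add: mult.left_commute)
  ultimately show False using sign[OF h(1)] by simp
qed

lemma has_real_derivative_Re_higher_deriv:
  assumes "v holomorphic_on S" "open S" "complex_of_real x \<in> S"
  shows "((\<lambda>t. Re ((deriv ^^ j) v (of_real t))) has_real_derivative
           Re ((deriv ^^ Suc j) v (of_real x))) (at x)"
proof -
  have "(deriv ^^ j) v holomorphic_on S" by (rule holomorphic_higher_deriv[OF assms(1,2)])
  then have "((deriv ^^ j) v has_field_derivative (deriv ^^ Suc j) v (of_real x)) (at (of_real x))"
    using holomorphic_derivI[OF _ assms(2,3)] by simp
  then show ?thesis
    by (intro has_field_derivative_Re has_vector_derivative_real_field)
qed

lemma bernstein_if_alternating_forward_diffs:
  fixes v :: "complex \<Rightarrow> complex"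
  assumes hol: "v holomorphic_on rhp"
    and nonneg: "\<And>x. 0 < x \<Longrightarrow> 0 \<le> Re (v (of_real x))"
    and alternating: "\<And>n h \<theta>. 1 \<le> n \<Longrightarrow> 0 < h \<Longrightarrow> 0 < \<theta> \<Longrightarrow>
        0 \<le> (-1) ^ (n - 1) * forward_diff h n (\<lambda>x. Re (v (of_real x))) \<theta>"
  shows "bernstein (\<lambda>x. Re (v (of_real x)))"
proof -
  define F where "F x = Re (v (of_real x))" for x
  define D where "D j x = Re ((deriv ^^ j) v (of_real x))" for j x
  have D: "(D j has_real_derivative D (Suc j) x) (at x)" if "0 < x" for j x
    unfolding D_def[abs_def] using that
    by (intro has_real_derivative_Re_higher_deriv[OF hol]) (auto simp: rhp_def open_halfspace_Re_gt)
  have D0: "D 0 = F" by (simp add: D_def F_def fun_eq_iff)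
  have higher_deriv: "(deriv ^^ n) F x = D n x" if "0 < x" for n x
    using that
  proof (induction n arbitrary: x)
    case (Suc n)
    have "((deriv ^^ n) F has_real_derivative D (Suc n) x) (at x)"
      by (rule has_field_derivative_transform_within_open[OF D[of x n], where S="{0<..}"])
         (use Suc in auto)
    then show ?case by (simp add: DERIV_imp_deriv)
  qed (simp add: D0)
  have "(deriv ^^ n) F field_differentiable (at x)" if "0 < x" for n x
  proof -
    have "((deriv ^^ n) F has_real_derivative D (Suc n) x) (at x)"
      by (rule has_field_derivative_transform_within_open[OF D[of x n], where S="{0<..}"])
         (use higher_deriv that in auto)
    then show ?thesis unfolding field_differentiable_def by blast
  qed
  moreover have "0 \<le> (-1) ^ (n - 1) * (deriv ^^ n) F \<theta>" if "1 \<le> n" "0 < \<theta>" for n \<theta>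
  proof -
    have "0 \<le> (-1) ^ (n - 1) * D n \<theta>"
      by (rule derivative_sign_if_forward_diff_sign[where D=D and a=0, OF D \<open>0 < \<theta>\<close>])
         (use alternating that in \<open>auto simp: D0 F_def[abs_def]\<close>)
    then show ?thesis using higher_deriv that by simp
  qed
  ultimately show ?thesis
    using nonneg unfolding bernstein_def F_def[symmetric] by (auto simp: F_def)
qed

section \<open>Laplace transforms of measures on \<open>[0, \<infinity>]\<close>\<close>

\<comment> \<open>\<open>enn2real \<infinity> = 0\<close>, so the atom at \<open>\<infinity>\<close> (where \<open>e\<^sup>-\<^sup>\<theta>\<^sup>y = 0\<close>) has to be cut off explicitly.\<close>
definition laplace :: "ennreal measure \<Rightarrow> real \<Rightarrow> real" where
  "laplace \<mu> \<theta> = (\<integral>y. indicator {..<\<infinity>} y * exp (- \<theta> * enn2real y) \<partial>\<mu>)"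

lemma integrable_laplace_diff_integrand:
  assumes "finite_measure \<mu>" "sets \<mu> = sets borel" "0 \<le> \<theta>" "0 \<le> h"
  shows "integrable \<mu>
    (\<lambda>y. indicator {..<\<infinity>} y * (exp (- h * enn2real y) - 1) ^ n * exp (- \<theta> * enn2real y))"
proof (rule finite_measure.integrable_const_bound[OF assms(1), where B=1])
  have "\<bar>exp (- h * enn2real y) - 1\<bar> \<le> 1" for y
    using assms(4) by (simp add: abs_le_iff mult_nonneg_nonneg add_increasing)
  then have "\<bar>indicator {..<\<infinity>} y * (exp (- h * enn2real y) - 1) ^ n * exp (- \<theta> * enn2real y)\<bar> \<le> 1"
    for y :: ennreal
    using assms(3) unfolding abs_mult power_abs
    by (intro mult_le_one power_le_one) (auto simp: indicator_def mult_nonneg_nonneg)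
  then show "AE y in \<mu>.
      norm (indicator {..<\<infinity>} y * (exp (- h * enn2real y) - 1) ^ n * exp (- \<theta> * enn2real y)) \<le> 1"
    by simp
qed (simp add: measurable_cong_sets[OF assms(2) refl])

lemma integrable_laplace_integrand:
  assumes "finite_measure \<mu>" "sets \<mu> = sets borel" "0 \<le> \<theta>"
  shows "integrable \<mu> (\<lambda>y. indicator {..<\<infinity>} y * exp (- \<theta> * enn2real y))"
  using integrable_laplace_diff_integrand[OF assms order_refl, of 0] by simp

lemma forward_diff_laplace:
  assumes "finite_measure \<mu>" "sets \<mu> = sets borel" "0 \<le> \<theta>" "0 \<le> h"
  shows "forward_diff h n (laplace \<mu>) \<theta>
    = (\<integral>y. indicator {..<\<infinity>} y * (exp (- h * enn2real y) - 1) ^ n * exp (- \<theta> * enn2real y) \<partial>\<mu>)"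
  using assms(3)
proof (induction n arbitrary: \<theta>)
  case (Suc n)
  let ?f = "\<lambda>\<theta> y. indicator {..<\<infinity>} y * (exp (- h * enn2real y) - 1) ^ n * exp (- \<theta> * enn2real y)"
  have "forward_diff h (Suc n) (laplace \<mu>) \<theta> = (\<integral>y. ?f (\<theta> + h) y \<partial>\<mu>) - (\<integral>y. ?f \<theta> y \<partial>\<mu>)"
    using Suc.IH[of \<theta>] Suc.IH[of "\<theta> + h"] Suc.prems assms(4) by simp
  also have "\<dots> = (\<integral>y. ?f (\<theta> + h) y - ?f \<theta> y \<partial>\<mu>)"
    using Suc.prems assms
    by (intro Bochner_Integration.integral_diff[symmetric] integrable_laplace_diff_integrand) auto
  also have "\<dots> = (\<integral>y. indicator {..<\<infinity>} y * (exp (- h * enn2real y) - 1) ^ Suc n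
                      * exp (- \<theta> * enn2real y) \<partial>\<mu>)"
  proof (rule Bochner_Integration.integral_cong[OF refl])
    fix y
    have "exp (- (\<theta> + h) * enn2real y) = exp (- h * enn2real y) * exp (- \<theta> * enn2real y)"
      by (simp add: exp_add[symmetric] algebra_simps)
    then show "?f (\<theta> + h) y - ?f \<theta> y = indicator {..<\<infinity>} y * (exp (- h * enn2real y) - 1) ^ Suc n
                 * exp (- \<theta> * enn2real y)"
      by (simp add: algebra_simps)
  qed
  finally show ?case .
qed (simp add: laplace_def)

lemma laplace_alternating:
  assumes "finite_measure \<mu>" "sets \<mu> = sets borel" "0 \<le> \<theta>" "0 \<le> h"
  shows "0 \<le> (-1) ^ n * forward_diff h n (laplace \<mu>) \<theta>"
proof -
  have "(-1) ^ n * forward_diff h n (laplace \<mu>) \<theta> = (\<integral>y. (-1) ^ n *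
      (indicator {..<\<infinity>} y * (exp (- h * enn2real y) - 1) ^ n * exp (- \<theta> * enn2real y)) \<partial>\<mu>)"
    by (simp add: forward_diff_laplace[OF assms])
  also have "\<dots> =
      (\<integral>y. indicator {..<\<infinity>} y * (1 - exp (- h * enn2real y)) ^ n * exp (- \<theta> * enn2real y) \<partial>\<mu>)"
  proof (rule Bochner_Integration.integral_cong[OF refl])
    fix y
    have "(-1 :: real) ^ n * (exp (- h * enn2real y) - 1) ^ n = (1 - exp (- h * enn2real y)) ^ n"
      by (simp add: power_mult_distrib[symmetric])
    then show "(-1) ^ n * (indicator {..<\<infinity>} y * (exp (- h * enn2real y) - 1) ^ n * exp (- \<theta> * enn2real y))
        = indicator {..<\<infinity>} y * (1 - exp (- h * enn2real y)) ^ n * exp (- \<theta> * enn2real y)"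
      by (metis mult.assoc mult.left_commute)
  qed
  also have "0 \<le> \<dots>"
    using assms(4) by (intro integral_nonneg_AE AE_I2 mult_nonneg_nonneg) (auto simp: mult_nonneg_nonneg)
  finally show ?thesis .
qed

lemma laplace_nonneg: "0 \<le> laplace \<mu> \<theta>"
  unfolding laplace_def by (intro integral_nonneg_AE AE_I2) auto

lemma laplace_le_1:
  assumes "prob_space \<mu>" "sets \<mu> = sets borel" "0 \<le> \<theta>"
  shows "laplace \<mu> \<theta> \<le> 1"
proof -
  interpret prob_space \<mu> by fact
  have "laplace \<mu> \<theta> \<le> (\<integral>y. 1 \<partial>\<mu>)" unfolding laplace_def
    using integrable_laplace_integrand[OF finite_measure_axioms assms(2,3)] assms(3)
    by (intro integral_mono) (auto simp: indicator_def mult_nonneg_nonneg)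
  then show ?thesis by (simp add: prob_space)
qed

lemma laplace_antimono:
  assumes "finite_measure \<mu>" "sets \<mu> = sets borel" "0 \<le> \<theta>\<^sub>1" "\<theta>\<^sub>1 \<le> \<theta>\<^sub>2"
  shows "laplace \<mu> \<theta>\<^sub>2 \<le> laplace \<mu> \<theta>\<^sub>1"
  unfolding laplace_def using assms
  by (intro integral_mono integrable_laplace_integrand) (auto simp: indicator_def intro!: mult_right_mono)

lemma measure_atMost_le_laplace:
  assumes "finite_measure \<mu>" "sets \<mu> = sets borel" "0 \<le> r" "0 \<le> \<theta>"
  shows "measure \<mu> {..ennreal r} * exp (- \<theta> * r) \<le> laplace \<mu> \<theta>"
proof -
  have "measure \<mu> {..ennreal r} * exp (- \<theta> * r) = (\<integral>y. indicator {..ennreal r} y * exp (- \<theta> * r) \<partial>\<mu>)"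
    using assms(2) by (simp add: sets_eq_imp_space_eq)
  also have "\<dots> \<le> laplace \<mu> \<theta>"
    unfolding laplace_def
  proof (intro integral_mono integrable_laplace_integrand integrable_mult_left integrable_real_indicator)
    fix y :: ennreal
    show "indicator {..ennreal r} y * exp (- \<theta> * r) \<le> indicator {..<\<infinity>} y * exp (- \<theta> * enn2real y)"
    proof (cases "y \<le> ennreal r")
      case True
      then have "y < \<infinity>" "enn2real y \<le> r"
        using assms(3) le_less_trans[OF True ennreal_less_top] by (auto simp: enn2real_leI)
      then show ?thesis using True assms(4) by (simp add: mult_left_mono)
    qed simp
  qed (use assms finite_measure.emeasure_finite in \<open>auto simp: top.not_eq_extremum\<close>)
  finally show ?thesis .
qed

lemma lessThan_ennreal_eq_UN_atMost:
  assumes "0 < x"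
  shows "{..<ennreal x} = (\<Union>n. {..ennreal (x * real n / real (Suc n))})"
proof (intro subset_antisym subsetI)
  fix y assume y: "y \<in> {..<ennreal x}"
  then have "y < \<infinity>" using less_trans[OF _ ennreal_less_top] by auto
  then obtain r where r: "y = ennreal r" "0 \<le> r" by (cases y) auto
  with y have "r < x" by (simp add: ennreal_less_iff)
  obtain n :: nat where "r / (x - r) \<le> real n" using real_arch_simple by blast
  then have "r \<le> x * real n / real (Suc n)" using r \<open>r < x\<close> by (simp add: field_simps)
  then show "y \<in> (\<Union>n. {..ennreal (x * real n / real (Suc n))})" using r(1) ennreal_leI by blast
next
  fix y assume "y \<in> (\<Union>n. {..ennreal (x * real n / real (Suc n))})"
  then obtain n where "y \<le> ennreal (x * real n / real (Suc n))" by auto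
  moreover have "x * real n / real (Suc n) < x" using assms by (simp add: field_simps)
  ultimately show "y \<in> {..<ennreal x}"
    using ennreal_lessI[OF assms] le_less_trans by (metis lessThan_iff)
qed

lemma null_below_if_laplace_le_exp:
  assumes "prob_space \<mu>" "sets \<mu> = sets borel" "0 < x"
    and bound: "\<And>\<theta>. 0 < \<theta> \<Longrightarrow> laplace \<mu> \<theta> \<le> exp (- \<theta> * x)"
  shows "measure \<mu> {..<ennreal x} = 0"
proof -
  interpret prob_space \<mu> by fact
  have null: "measure \<mu> {..ennreal r} = 0" if "0 \<le> r" "r < x" for r
  proof -
    have decay: "measure \<mu> {..ennreal r} \<le> exp (- \<theta> * (x - r))" if "0 < \<theta>" for \<theta>
    proof -
      have "measure \<mu> {..ennreal r} * exp (- \<theta> * r) \<le> laplace \<mu> \<theta>"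
        using that by (intro measure_atMost_le_laplace[OF finite_measure_axioms assms(2) \<open>0 \<le> r\<close>]) simp
      also have "\<dots> \<le> exp (- \<theta> * x)" using bound that by blast
      finally have "measure \<mu> {..ennreal r} \<le> exp (- \<theta> * x) / exp (- \<theta> * r)"
        by (simp add: le_divide_eq)
      also have "\<dots> = exp (- \<theta> * (x - r))" by (simp add: exp_diff[symmetric] algebra_simps)
      finally show ?thesis .
    qed
    then have "measure \<mu> {..ennreal r} \<le> exp (- real (Suc n) * (x - r))" for n
      by (intro decay) simp
    moreover have "(\<lambda>n. exp (- real (Suc n) * (x - r))) \<longlonglongrightarrow> 0" using \<open>r < x\<close> by real_asymp
    ultimately have "measure \<mu> {..ennreal r} \<le> 0" by (intro LIMSEQ_le_const) auto
    then show ?thesis by (simp add: antisym)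
  qed
  have "(\<Union>n. {..ennreal (x * real n / real (Suc n))}) \<in> null_sets \<mu>"
    using null assms by (intro null_sets_UN null_setsI) (auto simp: field_simps emeasure_eq_measure)
  then show ?thesis
    by (simp add: measure_eq_0_null_sets lessThan_ennreal_eq_UN_atMost[OF \<open>0 < x\<close>])
qed

lemma laplace_le_exp_if_null_below:
  assumes "prob_space \<mu>" "sets \<mu> = sets borel" "0 < x" "0 < \<theta>"
    and "measure \<mu> {..<ennreal x} = 0"
  shows "laplace \<mu> \<theta> \<le> exp (- \<theta> * x)"
proof -
  interpret prob_space \<mu> by fact
  have null: "{..<ennreal x} \<in> null_sets \<mu>"
    using assms(2,5) by (simp add: null_setsI emeasure_eq_measure)
  have "AE y in \<mu>. indicator {..<\<infinity>} y * exp (- \<theta> * enn2real y) \<le> exp (- \<theta> * x)"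
  proof (rule AE_I'[OF null], safe)
    fix y assume far: "\<not> indicator {..<\<infinity>} y * exp (- \<theta> * enn2real y) \<le> exp (- \<theta> * x)"
    show "y < ennreal x"
    proof (cases "y < \<infinity>")
      case True
      with far have "\<theta> * enn2real y < \<theta> * x" by simp
      then have "enn2real y < x" using \<open>0 < \<theta>\<close> by simp
      with True show ?thesis using ennreal_lessI[OF \<open>0 < x\<close>] by fastforce
    qed (use far in simp)
  qed
  then have "laplace \<mu> \<theta> \<le> (\<integral>y. exp (- \<theta> * x) \<partial>\<mu>)"
    unfolding laplace_def using \<open>0 < \<theta>\<close> assms(2)
    by (intro integral_mono_AE integrable_laplace_integrand finite_measure_axioms) auto
  then show ?thesis by (simp add: prob_space)
qed

lemma laplace_le_exp_iff_null_below:
  assumes "prob_space \<mu>" "sets \<mu> = sets borel" "0 < x"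
  shows "(\<forall>\<theta>>0. laplace \<mu> \<theta> \<le> exp (- \<theta> * x)) \<longleftrightarrow> measure \<mu> {..<ennreal x} = 0"
  using null_below_if_laplace_le_exp[OF assms] laplace_le_exp_if_null_below[OF assms] by blast

lemma has_field_derivative_integral_dominated:
  fixes g :: "complex \<Rightarrow> 'a \<Rightarrow> complex"
  assumes fin: "finite_measure \<mu>" and "0 < r"
    and meas: "\<And>w. g w \<in> borel_measurable \<mu>" "g' \<in> borel_measurable \<mu>"
    and int: "\<And>w. dist w z < r \<Longrightarrow> integrable \<mu> (g w)"
    and deriv: "\<And>y. ((\<lambda>w. g w y) has_field_derivative g' y) (at z)"
    and bound: "\<And>w y. dist w z < r \<Longrightarrow> w \<noteq> z \<Longrightarrow> norm ((g w y - g z y) / (w - z)) \<le> B"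
  shows "((\<lambda>w. \<integral>y. g w y \<partial>\<mu>) has_field_derivative (\<integral>y. g' y \<partial>\<mu>)) (at z)"
  unfolding has_field_derivative_iff tendsto_at_iff_sequentially
proof (intro allI impI)
  fix X :: "nat \<Rightarrow> complex"
  assume X_ne: "\<forall>i. X i \<in> UNIV - {z}" and X: "X \<longlonglongrightarrow> z"
  obtain N where N: "\<And>n. N \<le> n \<Longrightarrow> dist (X n) z < r"
    using tendstoD[OF X \<open>0 < r\<close>] by (auto simp: eventually_sequentially)
  define q where "q i y = (g (X (i + N)) y - g z y) / (X (i + N) - z)" for i y
  have "(\<lambda>i. \<integral>y. q i y \<partial>\<mu>) \<longlonglongrightarrow> (\<integral>y. g' y \<partial>\<mu>)"
  proof (rule integral_dominated_convergence[where w="\<lambda>_. B"])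
    have X_at: "filterlim (\<lambda>i. X (i + N)) (at z) sequentially"
      using X_ne by (intro filterlim_atI LIMSEQ_ignore_initial_segment[OF X]) auto
    show "AE y in \<mu>. (\<lambda>i. q i y) \<longlonglongrightarrow> g' y"
    proof (rule AE_I2)
      fix y
      have "((\<lambda>w. (g w y - g z y) / (w - z)) \<longlongrightarrow> g' y) (at z)"
        using deriv[of y] by (simp add: has_field_derivative_iff)
      from filterlim_compose[OF this X_at] show "(\<lambda>i. q i y) \<longlonglongrightarrow> g' y" by (simp add: q_def)
    qed
    show "AE y in \<mu>. norm (q i y) \<le> B" for i
      using bound[OF N[OF le_add2]] X_ne by (intro AE_I2) (simp add: q_def)
    show "q i \<in> borel_measurable \<mu>" for i
      unfolding q_def using meas(1) by (intro borel_measurable_divide borel_measurable_diff) auto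
  qed (use meas(2) finite_measure.integrable_const[OF fin] in auto)
  moreover have "((\<integral>y. g (X (i + N)) y \<partial>\<mu>) - (\<integral>y. g z y \<partial>\<mu>)) / (X (i + N) - z) = (\<integral>y. q i y \<partial>\<mu>)" for i
    using int N[of "i + N"] \<open>0 < r\<close> by (simp add: q_def Bochner_Integration.integral_diff)
  ultimately have "(\<lambda>i. ((\<integral>y. g (X (i + N)) y \<partial>\<mu>) - (\<integral>y. g z y \<partial>\<mu>)) / (X (i + N) - z))
      \<longlonglongrightarrow> (\<integral>y. g' y \<partial>\<mu>)"
    by simp
  then show "((\<lambda>w. ((\<integral>y. g w y \<partial>\<mu>) - (\<integral>y. g z y \<partial>\<mu>)) / (w - z)) \<circ> X) \<longlonglongrightarrow> (\<integral>y. g' y \<partial>\<mu>)"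
    unfolding comp_def by (rule LIMSEQ_offset)
qed

definition laplace_complex :: "ennreal measure \<Rightarrow> complex \<Rightarrow> complex" where
  "laplace_complex \<mu> z = (\<integral>y. of_real (indicator {..<\<infinity>} y) * exp (- z * of_real (enn2real y)) \<partial>\<mu>)"

lemma laplace_complex_of_real: "laplace_complex \<mu> (of_real \<theta>) = of_real (laplace \<mu> \<theta>)"
proof -
  have "laplace_complex \<mu> (of_real \<theta>)
      = (\<integral>y. complex_of_real (indicator {..<\<infinity>} y * exp (- \<theta> * enn2real y)) \<partial>\<mu>)"
    unfolding laplace_complex_def by (rule Bochner_Integration.integral_cong) (auto simp flip: exp_of_real)
  also have "\<dots> = of_real (laplace \<mu> \<theta>)"
    unfolding laplace_def by (rule integral_complex_of_real)
  finally show ?thesis .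
qed

lemma norm_laplace_complex_le: "norm (laplace_complex \<mu> z) \<le> laplace \<mu> (Re z)"
proof -
  have "norm (laplace_complex \<mu> z)
      \<le> (\<integral>y. norm (of_real (indicator {..<\<infinity>} y) * exp (- z * of_real (enn2real y))) \<partial>\<mu>)"
    unfolding laplace_complex_def by (rule integral_norm_bound)
  also have "\<dots> = laplace \<mu> (Re z)"
    unfolding laplace_def by (rule Bochner_Integration.integral_cong) (auto simp: norm_mult indicator_def)
  finally show ?thesis .
qed

lemma norm_exp_difference_quotient_le:
  fixes Y :: real and w z :: complex
  assumes "0 \<le> Y" "norm (w - z) < Re z / 2" "w \<noteq> z"
  shows "norm ((exp (- w * of_real Y) - exp (- z * of_real Y)) / (w - z)) \<le> 2 / Re z"
proof -
  define r where "r = Re z"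
  have r: "0 < r" using le_less_trans[OF norm_ge_zero assms(2)] by (simp add: r_def)
  define B where "B = Y * exp (- (r / 2) * Y)"
  have "norm (- of_real Y * exp (- u * of_real Y)) \<le> B" if "u \<in> ball z (r / 2)" for u
  proof -
    have "\<bar>Re (u - z)\<bar> < r / 2"
      using abs_Re_le_cmod[of "u - z"] that by (simp add: dist_norm norm_minus_commute)
    moreover have "Re z - Re u \<le> \<bar>Re (u - z)\<bar>" by simp
    ultimately have "(r / 2) * Y \<le> Re u * Y"
      using assms(1) by (intro mult_right_mono) (auto simp: r_def)
    then have "exp (- Re u * Y) \<le> exp (- (r / 2) * Y)" by simp
    then show ?thesis using assms(1) by (simp add: norm_mult B_def mult_left_mono)
  qed
  moreover have "((\<lambda>u. exp (- u * of_real Y)) has_field_derivative - of_real Y * exp (- u * of_real Y))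
      (at u within ball z (r / 2))" for u
    by (auto intro!: derivative_eq_intros)
  ultimately have "norm (exp (- w * of_real Y) - exp (- z * of_real Y)) \<le> B * norm (w - z)"
    using assms(2) r
    by (intro field_differentiable_bound[of "ball z (r / 2)"]) (auto simp: r_def dist_norm norm_minus_commute)
  then have "norm ((exp (- w * of_real Y) - exp (- z * of_real Y)) / (w - z)) \<le> B"
    using assms(3) by (simp add: norm_divide divide_le_eq)
  also have "B \<le> 2 / r"
  proof -
    have "Y * r \<le> 2 * exp ((r / 2) * Y)"
      using exp_ge_add_one_self[of "(r / 2) * Y"] by (simp add: field_simps)
    then have "Y \<le> (2 / r) * exp ((r / 2) * Y)" using r by (simp add: field_simps)
    then have "B \<le> (2 / r) * exp ((r / 2) * Y) * exp (- (r / 2) * Y)"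
      unfolding B_def by (rule mult_right_mono) simp
    also have "\<dots> = 2 / r" by (simp add: mult.assoc flip: exp_add)
    finally show ?thesis .
  qed
  finally show ?thesis by (simp add: r_def)
qed

lemma has_field_derivative_laplace_complex:
  assumes fin: "finite_measure \<mu>" and sets: "sets \<mu> = sets borel" and "0 < Re z"
  shows "(laplace_complex \<mu> has_field_derivative
    (\<integral>y. of_real (indicator {..<\<infinity>} y) * (- of_real (enn2real y)) * exp (- z * of_real (enn2real y)) \<partial>\<mu>)) (at z)"
proof -
  define g where "g (w :: complex) y = of_real (indicator {..<\<infinity>} y) * exp (- w * of_real (enn2real y))"
    for w y
  define g' where "g' y = of_real (indicator {..<\<infinity>} y) * (- of_real (enn2real y)) * exp (- z * of_real (enn2real y))"
    for y
  have meas: "g w \<in> borel_measurable \<mu>" "g' \<in> borel_measurable \<mu>" for w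
    unfolding g_def g'_def by (simp_all add: measurable_cong_sets[OF sets refl])
  have int: "integrable \<mu> (g w)" if "dist w z < Re z / 2" for w
  proof (rule finite_measure.integrable_const_bound[OF fin _ meas(1), where B=1])
    have "0 \<le> Re w"
      using abs_Re_le_cmod[of "w - z"] that by (simp add: dist_norm)
    then show "AE y in \<mu>. norm (g w y) \<le> 1"
      by (intro AE_I2) (simp add: g_def norm_mult indicator_def mult_nonneg_nonneg)
  qed
  have deriv: "((\<lambda>w. g w y) has_field_derivative g' y) (at z)" for y
    unfolding g_def g'_def by (auto intro!: derivative_eq_intros)
  have bound: "norm ((g w y - g z y) / (w - z)) \<le> 2 / Re z" if "dist w z < Re z / 2" "w \<noteq> z" for w y
  proof (cases "y < \<infinity>")
    case True
    then show ?thesis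
      using norm_exp_difference_quotient_le[of "enn2real y" w z] that by (simp add: g_def dist_norm)
  qed (use \<open>0 < Re z\<close> in \<open>simp add: g_def\<close>)
  have "laplace_complex \<mu> = (\<lambda>w. \<integral>y. g w y \<partial>\<mu>)"
    by (simp add: fun_eq_iff laplace_complex_def g_def)
  then show ?thesis
    using \<open>0 < Re z\<close> unfolding g'_def[symmetric]
    by (auto intro!: has_field_derivative_integral_dominated[where r="Re z / 2", OF fin _ meas int deriv bound])
qed

lemma holomorphic_laplace_complex:
  assumes "finite_measure \<mu>" "sets \<mu> = sets borel"
  shows "laplace_complex \<mu> holomorphic_on rhp"
  using has_field_derivative_laplace_complex[OF assms]
  unfolding holomorphic_on_def field_differentiable_def rhp_def
  by (blast intro: has_field_derivative_at_within)

section \<open>Laplace exponents\<close>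

lemma open_rhp: "open rhp"
  unfolding rhp_def by (rule open_halfspace_Re_gt)

lemma holomorphic_rhp_eq_0_if_eq_0_on_interval:
  assumes hol: "f holomorphic_on rhp" and "0 < a" "a < b"
    and zero: "\<And>\<theta>. a < \<theta> \<Longrightarrow> \<theta> < b \<Longrightarrow> f (of_real \<theta>) = 0" and "z \<in> rhp"
  shows "f z = 0"
proof -
  have "a islimpt {a<..<b}" using \<open>a < b\<close> by (rule islimpt_greaterThanLessThan1)
  have limpt: "of_real a islimpt (of_real ` {a<..<b} :: complex set)"
    unfolding islimpt_approachable
  proof (intro allI impI)
    fix e :: real assume "0 < e"
    with \<open>a islimpt {a<..<b}\<close> obtain x where "x \<in> {a<..<b}" "x \<noteq> a" "dist x a < e"
      unfolding islimpt_approachable by blast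
    then show "\<exists>x'\<in>of_real ` {a<..<b}. x' \<noteq> complex_of_real a \<and> dist x' (of_real a) < e"
      by (intro bexI[of _ "of_real x"]) auto
  qed
  have "connected rhp"
    unfolding rhp_def by (rule convex_connected[OF convex_halfspace_Re_gt])
  moreover have "of_real ` {a<..<b} \<subseteq> rhp" "of_real a \<in> rhp"
    using \<open>0 < a\<close> by (auto simp: rhp_def)
  ultimately show ?thesis
    by (rule analytic_continuation[OF hol open_rhp _ _ _ limpt _ \<open>z \<in> rhp\<close>]) (auto intro: zero)
qed

definition laplace_exponent :: "(real \<Rightarrow> ennreal measure) \<Rightarrow> (complex \<Rightarrow> complex) \<Rightarrow> bool" where
  "laplace_exponent M u \<longleftrightarrow> u holomorphic_on rhp
     \<and> (\<forall>x>0. prob_space (M x) \<and> sets (M x) = sets borel)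
     \<and> (\<forall>x \<theta>. 0 < x \<and> 0 < \<theta> \<longrightarrow> of_real (laplace (M x) \<theta>) = exp (- of_real x * u (of_real \<theta>)))"

lemma laplace_exponentD:
  assumes "laplace_exponent M u"
  shows "u holomorphic_on rhp"
    and "\<And>x. 0 < x \<Longrightarrow> prob_space (M x)" "\<And>x. 0 < x \<Longrightarrow> sets (M x) = sets borel"
    and "\<And>x \<theta>. 0 < x \<Longrightarrow> 0 < \<theta> \<Longrightarrow> of_real (laplace (M x) \<theta>) = exp (- of_real x * u (of_real \<theta>))"
  using assms unfolding laplace_exponent_def by auto

lemma laplace_exponent_real:
  assumes u: "laplace_exponent M u" and "0 < \<theta>"
  shows "Im (u (of_real \<theta>)) = 0"
    and "\<And>x. 0 < x \<Longrightarrow> laplace (M x) \<theta> = exp (- x * Re (u (of_real \<theta>)))"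
proof -
  define c where "c = u (of_real \<theta>)"
  have eq: "of_real (laplace (M x) \<theta>) = exp (- of_real x * c)" if "0 < x" for x
    using laplace_exponentD(4)[OF u that \<open>0 < \<theta>\<close>] by (simp add: c_def)
  have cos_pos: "0 < cos (x * Im c)" if "0 < x" for x
  proof -
    have "laplace (M x) \<theta> \<noteq> 0" using eq[OF that] by (metis exp_not_eq_zero of_real_0)
    then have "0 < laplace (M x) \<theta>" using laplace_nonneg[of "M x" \<theta>] by simp
    moreover have "laplace (M x) \<theta> = exp (- x * Re c) * cos (x * Im c)"
      using arg_cong[OF eq[OF that], of Re] by (simp add: Re_exp)
    ultimately show ?thesis by (simp add: zero_less_mult_iff)
  qed
  have "Im c = 0"
  proof (rule ccontr)
    assume "Im c \<noteq> 0"
    then have "pi / \<bar>Im c\<bar> * Im c = pi \<or> pi / \<bar>Im c\<bar> * Im c = - pi" by (auto simp: abs_if)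
    then have "cos (pi / \<bar>Im c\<bar> * Im c) = -1" by auto
    with cos_pos[of "pi / \<bar>Im c\<bar>"] \<open>Im c \<noteq> 0\<close> show False by simp
  qed
  then show "Im (u (of_real \<theta>)) = 0" by (simp add: c_def)
  define r where "r = Re c"
  have c: "c = of_real r" using \<open>Im c = 0\<close> by (simp add: r_def complex_eq_iff)
  fix x :: real assume "0 < x"
  have "complex_of_real (laplace (M x) \<theta>) = of_real (exp (- x * r))"
    using eq[OF \<open>0 < x\<close>] by (simp add: c flip: exp_of_real)
  then show "laplace (M x) \<theta> = exp (- x * Re (u (of_real \<theta>)))" by (simp add: r_def c_def)
qed

lemma laplace_exponent_nonneg:
  assumes u: "laplace_exponent M u" and "0 < \<theta>"
  shows "0 \<le> Re (u (of_real \<theta>))"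
proof -
  have "laplace (M 1) \<theta> \<le> 1"
    using laplace_exponentD(2,3)[OF u] \<open>0 < \<theta>\<close> by (intro laplace_le_1) auto
  then show ?thesis using laplace_exponent_real(2)[OF u \<open>0 < \<theta>\<close>, of 1] by simp
qed

lemma laplace_exponent_mono:
  assumes u: "laplace_exponent M u" and "0 < \<theta>\<^sub>1" "\<theta>\<^sub>1 \<le> \<theta>\<^sub>2"
  shows "Re (u (of_real \<theta>\<^sub>1)) \<le> Re (u (of_real \<theta>\<^sub>2))"
proof -
  have "laplace (M 1) \<theta>\<^sub>2 \<le> laplace (M 1) \<theta>\<^sub>1"
    using laplace_exponentD(2,3)[OF u] assms(2,3) by (intro laplace_antimono prob_space.finite_measure) auto
  then show ?thesis
    using laplace_exponent_real(2)[OF u, of _ 1] assms(2,3) by simp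
qed

lemma laplace_exponent_alternating:
  assumes u: "laplace_exponent M u" and "1 \<le> n" "0 < h" "0 < \<theta>"
  shows "0 \<le> (-1) ^ (n - 1) * forward_diff h n (\<lambda>x. Re (u (of_real x))) \<theta>"
proof -
  define V where "V x = Re (u (of_real x))" for x
  define G where "G m y = real (Suc m) * (1 - laplace (M (1 / real (Suc m))) y)" for m y
  have fin: "finite_measure (M (1 / real (Suc m)))" "sets (M (1 / real (Suc m))) = sets borel" for m
    using laplace_exponentD(2,3)[OF u] by (auto intro: prob_space.finite_measure)
  \<comment> \<open>The Laplace exponent is the limit of \<open>m (1 - laplace (M (1/m)))\<close>, whose forward differences
    alternate in sign.\<close>
  have "(\<lambda>m. G m y) \<longlonglongrightarrow> V y" if "\<theta> \<le> y" for y
  proof -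
    have "G m y = real (Suc m) * (1 - exp (- V y / real (Suc m)))" for m
      using laplace_exponent_real(2)[OF u, of y "1 / real (Suc m)"] that \<open>0 < \<theta>\<close>
      by (simp add: G_def V_def)
    moreover have "(\<lambda>m. real (Suc m) * (1 - exp (- V y / real (Suc m)))) \<longlonglongrightarrow> V y"
      by real_asymp
    ultimately show ?thesis by simp
  qed
  then have lim: "(\<lambda>m. (-1) ^ (n - 1) * forward_diff h n (G m) \<theta>) \<longlonglongrightarrow> (-1) ^ (n - 1) * forward_diff h n V \<theta>"
    using \<open>0 < h\<close> by (intro tendsto_mult_left tendsto_forward_diff) auto
  have nonneg: "0 \<le> (-1) ^ (n - 1) * forward_diff h n (G m) \<theta>" for m
  proof -
    define L where "L = laplace (M (1 / real (Suc m)))"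
    have G: "forward_diff h n (G m) \<theta> = - real (Suc m) * forward_diff h n L \<theta>"
      using forward_diff_scaled_complement[of n h "real (Suc m)" L \<theta>] \<open>1 \<le> n\<close>
      by (simp add: G_def[abs_def] L_def)
    have sign: "(-1 :: real) ^ n = - ((-1) ^ (n - 1))" using \<open>1 \<le> n\<close> by (cases n) auto
    have "0 \<le> (-1) ^ n * forward_diff h n L \<theta>"
      unfolding L_def using fin \<open>0 < h\<close> \<open>0 < \<theta>\<close> by (intro laplace_alternating) auto
    moreover have "(-1) ^ (n - 1) * forward_diff h n (G m) \<theta> = real (Suc m) * ((-1) ^ n * forward_diff h n L \<theta>)"
      unfolding G sign by (simp add: algebra_simps)
    ultimately show ?thesis by simp
  qed
  have "0 \<le> (-1) ^ (n - 1) * forward_diff h n V \<theta>"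
    by (rule LIMSEQ_le_const[OF lim]) (use nonneg in auto)
  then show ?thesis by (simp add: V_def[abs_def])
qed

lemma laplace_exponent_Re_ge:
  assumes u: "laplace_exponent M u" and z: "z \<in> rhp"
  shows "Re (u (of_real (Re z))) \<le> Re (u z)"
proof -
  have fin: "finite_measure (M 1)" "sets (M 1) = sets borel"
    using laplace_exponentD(2,3)[OF u] by (auto intro: prob_space.finite_measure)
  have "(\<lambda>w. laplace_complex (M 1) w - exp (- u w)) holomorphic_on rhp"
    by (intro holomorphic_intros holomorphic_laplace_complex[OF fin] laplace_exponentD(1)[OF u])
  then have "laplace_complex (M 1) z - exp (- u z) = 0"
  proof (rule holomorphic_rhp_eq_0_if_eq_0_on_interval[of _ 1 2])
    fix \<theta> :: real assume "1 < \<theta>" "\<theta> < 2"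
    then show "laplace_complex (M 1) (of_real \<theta>) - exp (- u (of_real \<theta>)) = 0"
      using laplace_exponentD(4)[OF u, of 1 \<theta>] by (simp add: laplace_complex_of_real)
  qed (use z in auto)
  then have "exp (- Re (u z)) \<le> laplace (M 1) (Re z)"
    using norm_laplace_complex_le[of "M 1" z] by simp
  also have "\<dots> = exp (- Re (u (of_real (Re z))))"
    using laplace_exponent_real(2)[OF u, of "Re z" 1] z by (simp add: rhp_def)
  finally show ?thesis by simp
qed

lemma funpow_ge_self:
  fixes f :: "real \<Rightarrow> real"
  assumes "\<And>x. 0 < x \<Longrightarrow> x \<le> f x" and "0 < x"
  shows "x \<le> (f ^^ n) x"
proof (induction n)
  case (Suc n)
  then have "(f ^^ n) x \<le> f ((f ^^ n) x)" using assms by (intro assms(1)) linarith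
  with Suc show ?case by simp
qed simp

lemma funpow_mono:
  fixes f :: "real \<Rightarrow> real"
  assumes "\<And>x y. 0 < x \<Longrightarrow> x \<le> y \<Longrightarrow> f x \<le> f y" and "\<And>x. 0 < x \<Longrightarrow> x \<le> f x"
    and "0 < x" "x \<le> y"
  shows "(f ^^ n) x \<le> (f ^^ n) y"
proof (induction n)
  case (Suc n)
  have "0 < (f ^^ n) x" using funpow_ge_self[OF assms(2,3), of n] assms(3) by linarith
  with Suc show ?case using assms(1) by simp
qed (use assms in simp)

lemma funpow_le_funpow:
  fixes f :: "real \<Rightarrow> real"
  assumes ge: "\<And>x. 0 < x \<Longrightarrow> x \<le> f x" and "0 < x" "m \<le> n"
  shows "(f ^^ m) x \<le> (f ^^ n) x"
proof -
  have "0 < (f ^^ m) x" using funpow_ge_self[OF ge \<open>0 < x\<close>, of m] \<open>0 < x\<close> by linarith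
  then have "(f ^^ m) x \<le> (f ^^ (n - m)) ((f ^^ m) x)" using funpow_ge_self[OF ge] by blast
  also have "\<dots> = (f ^^ n) x"
    using \<open>m \<le> n\<close> by (simp flip: funpow_add[THEN fun_cong, unfolded comp_def])
  finally show ?thesis .
qed

lemma laplace_exponent_eq_id_if_fixed_point:
  assumes u: "laplace_exponent M u" and ge: "\<And>\<theta>. 0 < \<theta> \<Longrightarrow> \<theta> \<le> Re (u (of_real \<theta>))"
    and "0 < L" and fixed: "Re (u (of_real L)) = L" and "z \<in> rhp"
  shows "u z = z"
proof -
  define V where "V \<theta> = Re (u (of_real \<theta>))" for \<theta>
  \<comment> \<open>\<open>V\<close> is concave and lies above the diagonal, which it touches at \<open>L\<close>; hence \<open>V = id\<close>
    on \<open>(0, L)\<close>.\<close>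
  have V_id: "V \<theta> = \<theta>" if "0 < \<theta>" "\<theta> < L" for \<theta>
  proof -
    have "0 \<le> (-1) ^ (2 - 1) * forward_diff (L - \<theta>) 2 V \<theta>"
      using laplace_exponent_alternating[OF u, of 2 "L - \<theta>" \<theta>] that by (simp add: V_def[abs_def])
    then have "V (L + (L - \<theta>)) - V L - (V L - V \<theta>) \<le> 0"
      by (simp add: numeral_2_eq_2)
    moreover have "L + (L - \<theta>) \<le> V (L + (L - \<theta>))" unfolding V_def by (rule ge) (use that in linarith)
    moreover have "\<theta> \<le> V \<theta>" unfolding V_def by (rule ge) fact
    ultimately show ?thesis using fixed by (simp add: V_def)
  qed
  have "u (of_real \<theta>) - of_real \<theta> = 0" if "L / 2 < \<theta>" "\<theta> < L" for \<theta>
  proof -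
    have "Re (u (of_real \<theta>)) = \<theta>" using V_id[of \<theta>] that \<open>0 < L\<close> by (simp add: V_def)
    with laplace_exponent_real(1)[OF u, of \<theta>] that \<open>0 < L\<close> show ?thesis by (simp add: complex_eq_iff)
  qed
  moreover have "(\<lambda>z. u z - z) holomorphic_on rhp"
    by (intro holomorphic_intros laplace_exponentD(1)[OF u])
  ultimately have "u z - z = 0"
    using \<open>0 < L\<close> \<open>z \<in> rhp\<close> holomorphic_rhp_eq_0_if_eq_0_on_interval[of "\<lambda>z. u z - z" "L / 2" L z]
    by simp
  then show ?thesis by simp
qed

lemma laplace_exponent_iterates_unbounded:
  assumes u: "laplace_exponent M u" and ge: "\<And>\<theta>. 0 < \<theta> \<Longrightarrow> \<theta> \<le> Re (u (of_real \<theta>))"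
    and not_id: "\<not> (\<forall>z\<in>rhp. u z = z)" and "0 < \<theta>"
  shows "\<exists>n. R \<le> ((\<lambda>\<theta>. Re (u (of_real \<theta>))) ^^ n) \<theta>"
proof (rule ccontr)
  define V where "V \<theta> = Re (u (of_real \<theta>))" for \<theta>
  define a where "a n = (V ^^ n) \<theta>" for n
  assume "\<not> (\<exists>n. R \<le> ((\<lambda>\<theta>. Re (u (of_real \<theta>))) ^^ n) \<theta>)"
  then have bounded: "a n \<le> R" for n by (auto simp: a_def V_def[abs_def] not_le less_imp_le)
  have a_ge: "\<theta> \<le> a n" for n
    unfolding a_def using ge \<open>0 < \<theta>\<close> by (intro funpow_ge_self) (auto simp: V_def)
  have "incseq a"
  proof (rule incseq_SucI)
    fix n show "a n \<le> a (Suc n)"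
      using ge[of "a n"] a_ge[of n] \<open>0 < \<theta>\<close> by (simp add: a_def V_def)
  qed
  then obtain L where L: "a \<longlonglongrightarrow> L" "\<And>n. a n \<le> L"
    using incseq_convergent[of a R] bounded by blast
  have "0 < L" using L(2)[of 0] a_ge[of 0] \<open>0 < \<theta>\<close> by linarith
  have "isCont u (of_real L)"
    using laplace_exponentD(1)[OF u] \<open>0 < L\<close> open_rhp
    by (intro holomorphic_on_imp_continuous_on[THEN continuous_on_interior]) (auto simp: rhp_def interior_open)
  then have "(\<lambda>n. V (a n)) \<longlonglongrightarrow> V L"
    unfolding V_def using L(1) by (intro tendsto_Re isCont_tendsto_compose[where g=u] tendsto_of_real)
  moreover have "(\<lambda>n. V (a n)) \<longlonglongrightarrow> L"
    using LIMSEQ_Suc[OF L(1)] by (simp add: a_def)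
  ultimately have "V L = L" by (rule LIMSEQ_unique)
  then have "\<forall>z\<in>rhp. u z = z"
    using laplace_exponent_eq_id_if_fixed_point[OF u ge \<open>0 < L\<close>] by (simp add: V_def)
  with not_id show False by blast
qed

lemma laplace_exponent_iterates_Re_le:
  assumes u: "laplace_exponent M u" and ge: "\<And>\<theta>. 0 < \<theta> \<Longrightarrow> \<theta> \<le> Re (u (of_real \<theta>))"
    and z: "z \<in> rhp"
  shows "((\<lambda>\<theta>. Re (u (of_real \<theta>))) ^^ n) (Re z) \<le> Re ((u ^^ n) z)"
proof (induction n)
  case (Suc n)
  define V where "V \<theta> = Re (u (of_real \<theta>))" for \<theta>
  define w where "w = (u ^^ n) z"
  have "Re z \<le> (V ^^ n) (Re z)"
    using ge z by (intro funpow_ge_self) (auto simp: V_def rhp_def)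
  then have "(V ^^ n) (Re z) \<le> Re w" "0 < (V ^^ n) (Re z)"
    using Suc z by (auto simp: w_def V_def[abs_def] rhp_def)
  then have "w \<in> rhp" by (simp add: rhp_def)
  have "V ((V ^^ n) (Re z)) \<le> V (Re w)"
    using laplace_exponent_mono[OF u] \<open>(V ^^ n) (Re z) \<le> Re w\<close> \<open>0 < (V ^^ n) (Re z)\<close> by (simp add: V_def)
  also have "V (Re w) \<le> Re (u w)"
    using laplace_exponent_Re_ge[OF u \<open>w \<in> rhp\<close>] by (simp add: V_def)
  finally show ?case by (simp add: w_def V_def[abs_def])
qed simp

lemma DW_infinity_if_ge_id:
  assumes u: "laplace_exponent M u" and ge: "\<And>\<theta>. 0 < \<theta> \<Longrightarrow> \<theta> \<le> Re (u (of_real \<theta>))"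
    and not_id: "\<not> (\<forall>z\<in>rhp. u z = z)"
  shows "DW_infinity u"
  unfolding DW_infinity_def
proof (intro allI impI)
  fix K :: "complex set" and R :: real
  assume K: "compact K \<and> K \<subseteq> rhp"
  define V where "V \<theta> = Re (u (of_real \<theta>))" for \<theta>
  show "\<forall>\<^sub>F n in sequentially. \<forall>z\<in>K. R \<le> norm ((u ^^ n) z)"
  proof (cases "K = {}")
    case False
    moreover have "continuous_on K Re" by (intro continuous_intros)
    ultimately obtain z\<^sub>0 where z\<^sub>0: "z\<^sub>0 \<in> K" "\<And>z. z \<in> K \<Longrightarrow> Re z\<^sub>0 \<le> Re z"
      using continuous_attains_inf[of K Re] K by blast
    then have "0 < Re z\<^sub>0" using K by (auto simp: rhp_def)
    then obtain N where N: "R \<le> (V ^^ N) (Re z\<^sub>0)"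
      using laplace_exponent_iterates_unbounded[OF u ge not_id] by (auto simp: V_def[abs_def])
    have V_mono: "V x \<le> V y" if "0 < x" "x \<le> y" for x y
      using laplace_exponent_mono[OF u that] by (simp add: V_def)
    have V_ge: "x \<le> V x" if "0 < x" for x using ge[OF that] by (simp add: V_def)
    have "R \<le> norm ((u ^^ n) z)" if "N \<le> n" "z \<in> K" for n z
    proof -
      note N
      also have "(V ^^ N) (Re z\<^sub>0) \<le> (V ^^ n) (Re z\<^sub>0)"
        using funpow_le_funpow[OF V_ge \<open>0 < Re z\<^sub>0\<close> \<open>N \<le> n\<close>] .
      also have "\<dots> \<le> (V ^^ n) (Re z)"
        using funpow_mono[OF V_mono V_ge \<open>0 < Re z\<^sub>0\<close> z\<^sub>0(2)[OF \<open>z \<in> K\<close>]] .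
      also have "\<dots> \<le> Re ((u ^^ n) z)"
        using laplace_exponent_iterates_Re_le[OF u ge] K \<open>z \<in> K\<close> by (auto simp: V_def[abs_def])
      also have "\<dots> \<le> norm ((u ^^ n) z)" by (rule complex_Re_le_cmod)
      finally show ?thesis .
    qed
    then show ?thesis unfolding eventually_sequentially by blast
  qed simp
qed

lemma BF_if_ge_id:
  assumes u: "laplace_exponent M u" and ge: "\<And>\<theta>. 0 < \<theta> \<Longrightarrow> \<theta> \<le> Re (u (of_real \<theta>))"
  shows "BF u"
  unfolding BF_def
proof (intro conjI)
  show "u holomorphic_on rhp" by (rule laplace_exponentD(1)[OF u])
  show "\<forall>x>0. u (of_real x) \<in> \<real>"
    using laplace_exponent_real(1)[OF u] by (auto simp: complex_is_Real_iff)
  show "bernstein (\<lambda>x. Re (u (of_real x)))"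
    using laplace_exponentD(1)[OF u] laplace_exponent_nonneg[OF u] laplace_exponent_alternating[OF u]
    by (intro bernstein_if_alternating_forward_diffs) auto
  have "Re (u 1) \<noteq> 0" using ge[of 1] by simp
  then show "\<exists>z\<in>rhp. u z \<noteq> 0" by (intro bexI[of _ 1]) (auto simp: rhp_def)
qed

lemma laplace_exponent_pos_if_BF:
  assumes u: "laplace_exponent M u" and "BF u" and "0 < x"
  shows "0 < Re (u (of_real x))"
proof (rule ccontr)
  assume "\<not> 0 < Re (u (of_real x))"
  then have "Re (u (of_real y)) = 0" if "0 < y" "y \<le> x" for y
    using laplace_exponent_nonneg[OF u, of y] laplace_exponent_mono[OF u that] that by auto
  then have "u (of_real y) = 0" if "x / 2 < y" "y < x" for y
    using laplace_exponent_real(1)[OF u, of y] that \<open>0 < x\<close> by (simp add: complex_eq_iff)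
  then have "u z = 0" if "z \<in> rhp" for z
    using \<open>0 < x\<close> that laplace_exponentD(1)[OF u]
      holomorphic_rhp_eq_0_if_eq_0_on_interval[of u "x / 2" x z]
    by simp
  with \<open>BF u\<close> show False by (auto simp: BF_def)
qed

lemma ge_id_if_BF_inf:
  assumes u: "laplace_exponent M u" and "BF_inf u" and "0 < \<theta>"
  shows "\<theta> \<le> Re (u (of_real \<theta>))"
proof (cases "\<forall>z\<in>rhp. u z = z")
  case True
  with \<open>0 < \<theta>\<close> show ?thesis by (auto simp: rhp_def)
next
  case False
  with \<open>BF_inf u\<close> have BF: "BF u" and DW: "DW_infinity u" by (auto simp: BF_inf_def)
  define V where "V \<theta> = Re (u (of_real \<theta>))" for \<theta>
  have u_real: "u (of_real x) = of_real (V x)" if "0 < x" for x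
    using laplace_exponent_real(1)[OF u that] by (simp add: V_def complex_eq_iff)
  have V_mono: "V x \<le> V y" if "0 < x" "x \<le> y" for x y
    using laplace_exponent_mono[OF u that] by (simp add: V_def)
  have V_pos: "0 < V x" if "0 < x" for x
    using laplace_exponent_pos_if_BF[OF u BF that] by (simp add: V_def)
  show ?thesis
  proof (rule ccontr)
    assume "\<not> \<theta> \<le> Re (u (of_real \<theta>))"
    then have "V \<theta> < \<theta>" by (simp add: V_def)
    \<comment> \<open>Then the iterates of \<open>\<theta>\<close> stay real and in \<open>(0, \<theta>]\<close>, contradicting Denjoy-Wolff point \<open>\<infinity>\<close>.\<close>
    have iter: "(u ^^ n) (of_real \<theta>) = of_real ((V ^^ n) \<theta>) \<and> 0 < (V ^^ n) \<theta> \<and> (V ^^ n) \<theta> \<le> \<theta>" for n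
    proof (induction n)
      case (Suc n)
      then have "V ((V ^^ n) \<theta>) \<le> V \<theta>" using V_mono by simp
      then show ?case using Suc u_real V_pos \<open>V \<theta> < \<theta>\<close> by simp
    qed (use \<open>0 < \<theta>\<close> in simp)
    have "compact {of_real \<theta>} \<and> {of_real \<theta>} \<subseteq> rhp" using \<open>0 < \<theta>\<close> by (simp add: rhp_def)
    with DW have "\<forall>\<^sub>F n in sequentially. \<forall>z\<in>{of_real \<theta>}. \<theta> + 1 \<le> norm ((u ^^ n) z)"
      unfolding DW_infinity_def by blast
    then obtain N where "\<theta> + 1 \<le> norm ((u ^^ N) (of_real \<theta>))"
      by (auto simp: eventually_sequentially)
    with iter[of N] show False by simp
  qed
qed

theorem BF_inf_iff_ge_id:
  assumes "laplace_exponent M u"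
  shows "BF_inf u \<longleftrightarrow> (\<forall>\<theta>>0. \<theta> \<le> Re (u (of_real \<theta>)))"
  using assms BF_if_ge_id DW_infinity_if_ge_id ge_id_if_BF_inf unfolding BF_inf_def by blast

section \<open>Branching processes\<close>

lemma
  assumes "branching_process P Z k" and "0 \<le> s"
  shows branching_process_prob_space: "prob_space (P s x)"
    and branching_process_start: "AE \<omega> in P s x. Z s \<omega> = x"
    and branching_process_measurable: "s \<le> r \<Longrightarrow> Z r \<in> borel_measurable (P s x)"
  using assms unfolding branching_process_def by auto

lemma
  assumes "branching_process P Z k" and "0 \<le> s" "s \<le> t"
  shows branching_process_kernel_prob_space: "prob_space (k s t x)"
    and sets_branching_process_kernel: "sets (k s t x) = sets borel"
  using assms unfolding branching_process_def branching_kernels_def by auto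

lemma branching_process_markov:
  assumes "branching_process P Z k" "0 \<le> s" "s \<le> t" "t \<le> u"
    and "f \<in> borel_measurable borel" "bounded (range f)"
  shows "AE \<omega> in P s x. real_cond_exp (P s x) (nat_filt (P s x) Z s t) (\<lambda>\<omega>. f (Z u \<omega>)) \<omega>
           = (\<integral>y. f y \<partial>(k t u (Z t \<omega>)))"
  using assms unfolding branching_process_def by blast

lemma
  assumes meas: "\<And>r. r \<in> {s..t} \<Longrightarrow> Z r \<in> borel_measurable M" and fin: "finite_measure M"
  shows sigma_finite_subalgebra_nat_filt: "sigma_finite_subalgebra M (nat_filt M Z s t)"
    and measurable_nat_filt: "r \<in> {s..t} \<Longrightarrow> Z r \<in> borel_measurable (nat_filt M Z s t)"
proof -
  define G where "G = (\<Union>r\<in>{s..t}. {Z r -` B \<inter> space M | B. B \<in> sets (borel :: ennreal measure)})"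
  have GM: "G \<subseteq> sets M" unfolding G_def using meas by (auto intro: measurable_sets)
  then have "G \<subseteq> Pow (space M)" using sets.sets_into_space by blast
  then have space: "space (nat_filt M Z s t) = space M"
    and sets: "sets (nat_filt M Z s t) = sigma_sets (space M) G"
    unfolding nat_filt_def G_def[symmetric] by (simp_all add: space_measure_of_conv sets_measure_of_conv)
  have "sets (nat_filt M Z s t) \<subseteq> sets M"
    unfolding sets using sets.sigma_sets_subset[OF GM] .
  then have "finite_measure_subalgebra M (nat_filt M Z s t)"
    using fin space unfolding finite_measure_subalgebra_def finite_measure_subalgebra_axioms_def subalgebra_def
    by simp
  then show "sigma_finite_subalgebra M (nat_filt M Z s t)"
    by (rule finite_measure_subalgebra_is_sigma_finite)
  assume "r \<in> {s..t}"
  show "Z r \<in> borel_measurable (nat_filt M Z s t)"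
  proof (rule measurableI)
    fix A :: "ennreal set" assume "A \<in> sets borel"
    then have "Z r -` A \<inter> space M \<in> G" unfolding G_def using \<open>r \<in> {s..t}\<close> by blast
    then show "Z r -` A \<inter> space (nat_filt M Z s t) \<in> sets (nat_filt M Z s t)"
      unfolding space sets by (rule sigma_sets.Basic)
  qed simp
qed

lemma bounded_range_indicator: "bounded (range (indicator A :: 'a \<Rightarrow> real))"
  by (rule bounded_subset[OF finite_imp_bounded[of "{0, 1}"]]) (auto simp: indicator_def)

lemma measure_Z_in_eq_kernel:
  assumes bp: "branching_process P Z k" and "0 \<le> s" "s \<le> r" and B: "B \<in> sets borel"
  shows "measure (P s x) {\<omega> \<in> space (P s x). Z r \<omega> \<in> B} = measure (k s r x) B"
proof -
  define M where "M = P s x"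
  interpret prob_space M unfolding M_def by (rule branching_process_prob_space[OF bp \<open>0 \<le> s\<close>])
  have meas: "Z r' \<in> borel_measurable M" if "s \<le> r'" for r'
    unfolding M_def using branching_process_measurable[OF bp \<open>0 \<le> s\<close> that] .
  define f where "f \<omega> = (indicator B (Z r \<omega>) :: real)" for \<omega>
  have f: "f \<in> borel_measurable M" unfolding f_def using meas[OF \<open>s \<le> r\<close>] B by measurable
  have "integrable M f" by (rule integrable_const_bound[where B=1]) (auto simp: f f_def indicator_def)
  then have "(\<integral>\<omega>. real_cond_exp M (nat_filt M Z s s) f \<omega> \<partial>M) = (\<integral>\<omega>. f \<omega> \<partial>M)"
    using sigma_finite_subalgebra_nat_filt[OF meas finite_measure_axioms]
    by (intro sigma_finite_subalgebra.real_cond_exp_int(2)) auto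
  moreover have "AE \<omega> in M. real_cond_exp M (nat_filt M Z s s) f \<omega> = measure (k s r x) B"
    using branching_process_markov[OF bp \<open>0 \<le> s\<close> order_refl \<open>s \<le> r\<close>
        borel_measurable_indicator[OF B] bounded_range_indicator, of x]
      branching_process_start[OF bp \<open>0 \<le> s\<close>, of x]
    unfolding M_def f_def
  proof eventually_elim
    case (elim \<omega>)
    then show ?case
      using sets_eq_imp_space_eq[OF sets_branching_process_kernel[OF bp \<open>0 \<le> s\<close> \<open>s \<le> r\<close>]] by simp
  qed
  then have "(\<integral>\<omega>. real_cond_exp M (nat_filt M Z s s) f \<omega> \<partial>M) = (\<integral>\<omega>. measure (k s r x) B \<partial>M)"
    by (intro integral_cong_AE) (simp_all add: borel_measurable_cond_exp2)
  then have "(\<integral>\<omega>. real_cond_exp M (nat_filt M Z s s) f \<omega> \<partial>M) = measure (k s r x) B"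
    by (simp add: prob_space)
  moreover have "(\<integral>\<omega>. f \<omega> \<partial>M) = measure M {\<omega> \<in> space M. Z r \<omega> \<in> B}"
  proof -
    have "{\<omega> \<in> space M. Z r \<omega> \<in> B} \<in> sets M" using meas[OF \<open>s \<le> r\<close>] B by measurable
    moreover have "f \<omega> = indicator {\<omega> \<in> space M. Z r \<omega> \<in> B} \<omega>" if "\<omega> \<in> space M" for \<omega>
      using that by (simp add: f_def indicator_def)
    ultimately show ?thesis by (simp add: Bochner_Integration.integral_cong)
  qed
  ultimately show ?thesis by (simp add: M_def)
qed

lemma prob_ge_start_iff_kernel_null_below:
  assumes bp: "branching_process P Z k" and "0 \<le> s" "s \<le> t"
  shows "measure (P s x) {\<omega> \<in> space (P s x). x \<le> Z t \<omega>} = 1 \<longleftrightarrow> measure (k s t x) {..<x} = 0"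
proof -
  interpret prob_space "P s x" by (rule branching_process_prob_space[OF bp \<open>0 \<le> s\<close>])
  have "{\<omega> \<in> space (P s x). Z t \<omega> \<in> {..<x}} \<in> events"
    using branching_process_measurable[OF bp \<open>0 \<le> s\<close> \<open>s \<le> t\<close>] by measurable
  moreover have "{\<omega> \<in> space (P s x). x \<le> Z t \<omega>} = space (P s x) - {\<omega> \<in> space (P s x). Z t \<omega> \<in> {..<x}}"
    by auto
  ultimately show ?thesis
    using prob_compl measure_Z_in_eq_kernel[OF bp \<open>0 \<le> s\<close> \<open>s \<le> t\<close>, of "{..<x}" x] by simp
qed

lemma kernel_null_below:
  assumes bp: "branching_process P Z k" and "0 \<le> t" "t \<le> u"
    and null: "\<And>y. 0 < y \<Longrightarrow> measure (k t u (ennreal y)) {..<ennreal y} = 0" and "c < z"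
  shows "measure (k t u z) {..<c} = 0"
proof (cases "z = \<infinity>")
  case True
  then show ?thesis using bp \<open>0 \<le> t\<close> \<open>t \<le> u\<close>
    by (auto simp: branching_process_def branching_kernels_def measure_return)
next
  case False
  then obtain y where y: "z = ennreal y" "0 \<le> y" by (cases z) auto
  with \<open>c < z\<close> have "0 < y" by (auto intro: ccontr)
  interpret finite_measure "k t u z"
    using branching_process_kernel_prob_space[OF bp \<open>0 \<le> t\<close> \<open>t \<le> u\<close>] by (rule prob_space.finite_measure)
  have "measure (k t u z) {..<c} \<le> measure (k t u z) {..<ennreal y}"
    using \<open>c < z\<close> y sets_branching_process_kernel[OF bp \<open>0 \<le> t\<close> \<open>t \<le> u\<close>]
    by (intro finite_measure_mono) auto
  also have "\<dots> = 0" using null[OF \<open>0 < y\<close>] y by simp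
  finally show ?thesis by (simp add: antisym)
qed

lemma AE_real_cond_exp_below_eq_0:
  assumes bp: "branching_process P Z k" and "0 \<le> s" "s \<le> t" "t \<le> u"
    and null: "\<And>y. 0 < y \<Longrightarrow> measure (k t u (ennreal y)) {..<ennreal y} = 0"
  shows "AE \<omega> in P s x. c < Z t \<omega> \<longrightarrow>
    real_cond_exp (P s x) (nat_filt (P s x) Z s t) (\<lambda>\<omega>. indicator {..<c} (Z u \<omega>)) \<omega> = 0"
proof -
  have "AE \<omega> in P s x. real_cond_exp (P s x) (nat_filt (P s x) Z s t) (\<lambda>\<omega>. indicator {..<c} (Z u \<omega>)) \<omega>
      = measure (k t u (Z t \<omega>)) {..<c}"
    using branching_process_markov[OF bp \<open>0 \<le> s\<close> \<open>s \<le> t\<close> \<open>t \<le> u\<close>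
        borel_measurable_indicator bounded_range_indicator, of "{..<c}" x]
      sets_eq_imp_space_eq[OF sets_branching_process_kernel[OF bp _ \<open>t \<le> u\<close>]] \<open>0 \<le> s\<close> \<open>s \<le> t\<close>
    by simp
  then show ?thesis
  proof eventually_elim
    case (elim \<omega>)
    show ?case
    proof
      assume "c < Z t \<omega>"
      then have "measure (k t u (Z t \<omega>)) {..<c} = 0"
        using kernel_null_below[OF bp _ \<open>t \<le> u\<close> null] \<open>0 \<le> s\<close> \<open>s \<le> t\<close> by simp
      with elim show "real_cond_exp (P s x) (nat_filt (P s x) Z s t) (\<lambda>\<omega>. indicator {..<c} (Z u \<omega>)) \<omega> = 0"
        by simp
    qed
  qed
qed

lemma null_sets_downcrossing:
  assumes bp: "branching_process P Z k" and "0 \<le> s" "s \<le> t" "t \<le> u"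
    and null: "\<And>y. 0 < y \<Longrightarrow> measure (k t u (ennreal y)) {..<ennreal y} = 0"
  shows "{\<omega> \<in> space (P s x). Z u \<omega> < c \<and> c < Z t \<omega>} \<in> null_sets (P s x)"
proof -
  define M where "M = P s x"
  define F where "F = nat_filt M Z s t"
  define S where "S = {\<omega> \<in> space M. Z u \<omega> < c \<and> c < Z t \<omega>}"
  define f where "f \<omega> = (indicator {c<..} (Z t \<omega>) :: real)" for \<omega>
  define g where "g \<omega> = (indicator {..<c} (Z u \<omega>) :: real)" for \<omega>
  interpret prob_space M unfolding M_def by (rule branching_process_prob_space[OF bp \<open>0 \<le> s\<close>])
  have meas: "Z r \<in> borel_measurable M" if "s \<le> r" for r
    unfolding M_def using branching_process_measurable[OF bp \<open>0 \<le> s\<close> that] .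
  then have Zt: "Z t \<in> borel_measurable M" and Zu: "Z u \<in> borel_measurable M"
    using \<open>s \<le> t\<close> \<open>t \<le> u\<close> by auto
  have "Z t \<in> borel_measurable F"
    unfolding F_def using \<open>s \<le> t\<close> by (intro measurable_nat_filt[OF meas finite_measure_axioms]) auto
  then have fF: "f \<in> borel_measurable F" unfolding f_def by measurable
  have fM: "f \<in> borel_measurable M" unfolding f_def using Zt by measurable
  have gM: "g \<in> borel_measurable M" unfolding g_def using Zu by measurable
  have S: "S \<in> sets M" unfolding S_def using Zt Zu by measurable
  then have "measure M S = (\<integral>\<omega>. indicator S \<omega> \<partial>M)" by simp
  also have "\<dots> = (\<integral>\<omega>. f \<omega> * g \<omega> \<partial>M)"
    by (rule Bochner_Integration.integral_cong) (auto simp: S_def f_def g_def indicator_def)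
  also have "\<dots> = (\<integral>\<omega>. f \<omega> * real_cond_exp M F g \<omega> \<partial>M)"
  proof -
    have "integrable M (\<lambda>\<omega>. f \<omega> * g \<omega>)"
      by (rule integrable_const_bound[where B=1, OF _ borel_measurable_times[OF fM gM]])
         (auto simp: f_def g_def indicator_def)
    then show ?thesis
      using sigma_finite_subalgebra_nat_filt[OF meas finite_measure_axioms, of s t] fF gM
      unfolding F_def by (intro sigma_finite_subalgebra.real_cond_exp_intg(2)[symmetric]) auto
  qed
  also have "\<dots> = 0"
  proof -
    have "AE \<omega> in M. c < Z t \<omega> \<longrightarrow> real_cond_exp M F g \<omega> = 0"
      unfolding M_def F_def g_def by (rule AE_real_cond_exp_below_eq_0[OF assms])
    then have "AE \<omega> in M. f \<omega> * real_cond_exp M F g \<omega> = 0"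
      by eventually_elim (simp add: f_def indicator_def)
    then have "(\<integral>\<omega>. f \<omega> * real_cond_exp M F g \<omega> \<partial>M) = (\<integral>\<omega>. 0 \<partial>M)"
      using fM by (intro integral_cong_AE) (simp_all add: borel_measurable_cond_exp2)
    then show ?thesis by simp
  qed
  finally have "S \<in> null_sets M" using S by (intro null_setsI) (simp_all add: emeasure_eq_measure)
  then show ?thesis by (simp add: M_def S_def)
qed

lemma nondecreasing_if_kernels_null_below:
  assumes bp: "branching_process P Z k" and "0 \<le> s" "s \<le> t" "t \<le> u"
    and null: "\<And>y. 0 < y \<Longrightarrow> measure (k t u (ennreal y)) {..<ennreal y} = 0"
  shows "measure (P s x) {\<omega> \<in> space (P s x). Z t \<omega> \<le> Z u \<omega>} = 1"
proof -
  interpret prob_space "P s x" by (rule branching_process_prob_space[OF bp \<open>0 \<le> s\<close>])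
  have meas: "Z r \<in> borel_measurable (P s x)" if "s \<le> r" for r
    using branching_process_measurable[OF bp \<open>0 \<le> s\<close> that] .
  have "(\<Union>q::rat. {\<omega> \<in> space (P s x). Z u \<omega> < ennreal (of_rat q) \<and> ennreal (of_rat q) < Z t \<omega>})
      \<in> null_sets (P s x)"
    using null_sets_downcrossing[OF bp assms(2-4) null] by (intro null_sets_UN) auto
  moreover have "{\<omega> \<in> space (P s x). \<not> Z t \<omega> \<le> Z u \<omega>}
      \<subseteq> (\<Union>q::rat. {\<omega> \<in> space (P s x). Z u \<omega> < ennreal (of_rat q) \<and> ennreal (of_rat q) < Z t \<omega>})"
    using ennreal_rat_dense by (fastforce simp: not_le)
  ultimately have "AE \<omega> in P s x. Z t \<omega> \<le> Z u \<omega>" by (rule AE_I')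
  moreover have "{\<omega> \<in> space (P s x). Z t \<omega> \<le> Z u \<omega>} \<in> events"
    using meas[of t] meas[of u] \<open>s \<le> t\<close> \<open>t \<le> u\<close> by (intro borel_measurable_le) auto
  ultimately show ?thesis by (simp add: prob_eq_1)
qed

lemma ge_start_if_nondecreasing:
  assumes bp: "branching_process P Z k" and "0 \<le> s" "s \<le> t"
    and "measure (P s x) {\<omega> \<in> space (P s x). Z s \<omega> \<le> Z t \<omega>} = 1"
  shows "measure (P s x) {\<omega> \<in> space (P s x). x \<le> Z t \<omega>} = 1"
proof -
  interpret prob_space "P s x" by (rule branching_process_prob_space[OF bp \<open>0 \<le> s\<close>])
  have meas: "Z r \<in> borel_measurable (P s x)" if "s \<le> r" for r
    using branching_process_measurable[OF bp \<open>0 \<le> s\<close> that] .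
  have "Z s \<in> borel_measurable (P s x)" "Z t \<in> borel_measurable (P s x)"
    using meas \<open>s \<le> t\<close> by auto
  then have "{\<omega> \<in> space (P s x). Z s \<omega> \<le> Z t \<omega>} \<in> events" "{\<omega> \<in> space (P s x). x \<le> Z t \<omega>} \<in> events"
    by measurable
  with assms(4) have "AE \<omega> in P s x. Z s \<omega> \<le> Z t \<omega>" by (simp add: prob_eq_1)
  with branching_process_start[OF bp \<open>0 \<le> s\<close>] have "AE \<omega> in P s x. x \<le> Z t \<omega>" by eventually_elim simp
  with \<open>{\<omega> \<in> space (P s x). x \<le> Z t \<omega>} \<in> events\<close> show ?thesis by (simp add: prob_eq_1)
qed

lemma BF_inf_iff_prob_ge_start:
  assumes bp: "branching_process P Z k" and v: "laplace_exponents k v"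
    and "0 \<le> s" "s \<le> t" "0 < x"
  shows "BF_inf (v s t) \<longleftrightarrow> measure (P s (ennreal x)) {\<omega> \<in> space (P s (ennreal x)). ennreal x \<le> Z t \<omega>} = 1"
proof -
  have u: "laplace_exponent (\<lambda>x. k s t (ennreal x)) (v s t)"
    using v branching_process_kernel_prob_space[OF bp \<open>0 \<le> s\<close> \<open>s \<le> t\<close>]
      sets_branching_process_kernel[OF bp \<open>0 \<le> s\<close> \<open>s \<le> t\<close>] \<open>0 \<le> s\<close> \<open>s \<le> t\<close>
    by (auto simp: laplace_exponent_def laplace_exponents_def laplace_def)
  have "BF_inf (v s t) \<longleftrightarrow> (\<forall>\<theta>>0. \<theta> \<le> Re (v s t (of_real \<theta>)))"
    by (rule BF_inf_iff_ge_id[OF u])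
  also have "\<dots> \<longleftrightarrow> (\<forall>\<theta>>0. laplace (k s t (ennreal x)) \<theta> \<le> exp (- \<theta> * x))"
    using laplace_exponent_real(2)[OF u _ \<open>0 < x\<close>] \<open>0 < x\<close> by (simp add: mult.commute)
  also have "\<dots> \<longleftrightarrow> measure (k s t (ennreal x)) {..<ennreal x} = 0"
    using branching_process_kernel_prob_space[OF bp \<open>0 \<le> s\<close> \<open>s \<le> t\<close>]
      sets_branching_process_kernel[OF bp \<open>0 \<le> s\<close> \<open>s \<le> t\<close>] \<open>0 < x\<close>
    by (rule laplace_le_exp_iff_null_below)
  also have "\<dots> \<longleftrightarrow> measure (P s (ennreal x)) {\<omega> \<in> space (P s (ennreal x)). ennreal x \<le> Z t \<omega>} = 1"
    using prob_ge_start_iff_kernel_null_below[OF bp \<open>0 \<le> s\<close> \<open>s \<le> t\<close>] by simp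
  finally show ?thesis .
qed

lemma BF_inf_iff_prob_ge_start_all:
  assumes "branching_process P Z k" and "laplace_exponents k v"
  shows "(\<forall>s t. 0 \<le> s \<and> s \<le> t \<longrightarrow> BF_inf (v s t))
    \<longleftrightarrow> (\<forall>s t x. 0 \<le> s \<and> s \<le> t \<and> 0 < x \<longrightarrow>
           measure (P s (ennreal x)) {\<omega> \<in> space (P s (ennreal x)). ennreal x \<le> Z t \<omega>} = 1)"
    (is "?BF_inf \<longleftrightarrow> (\<forall>s t x. _ \<longrightarrow> ?ge_start s t x)")
proof (intro iffI allI impI)
  fix s t x :: real assume ?BF_inf "0 \<le> s \<and> s \<le> t \<and> 0 < x"
  then show "?ge_start s t x" using BF_inf_iff_prob_ge_start[OF assms, of s t x] by simp
next
  fix s t :: real assume "\<forall>s t x. 0 \<le> s \<and> s \<le> t \<and> 0 < x \<longrightarrow> ?ge_start s t x" "0 \<le> s \<and> s \<le> t"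
  then have "?ge_start s t 1" using zero_less_one by blast
  then show "BF_inf (v s t)" using BF_inf_iff_prob_ge_start[OF assms, of s t 1] \<open>0 \<le> s \<and> s \<le> t\<close> by simp
qed

lemma BF_inf_iff_prob_ge_start_ex:
  assumes "branching_process P Z k" and "laplace_exponents k v"
  shows "(\<forall>s t. 0 \<le> s \<and> s \<le> t \<longrightarrow> BF_inf (v s t))
    \<longleftrightarrow> (\<forall>s t. 0 \<le> s \<and> s \<le> t \<longrightarrow> (\<exists>x>0.
           measure (P s (ennreal x)) {\<omega> \<in> space (P s (ennreal x)). ennreal x \<le> Z t \<omega>} = 1))"
    (is "?BF_inf \<longleftrightarrow> (\<forall>s t. _ \<longrightarrow> (\<exists>x>0. ?ge_start s t x))")
proof (intro iffI allI impI)
  fix s t :: real assume ?BF_inf "0 \<le> s \<and> s \<le> t"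
  then have "?ge_start s t 1" using BF_inf_iff_prob_ge_start[OF assms, of s t 1] by simp
  then show "\<exists>x>0. ?ge_start s t x" by (intro exI[of _ 1]) simp
next
  fix s t :: real assume "\<forall>s t. 0 \<le> s \<and> s \<le> t \<longrightarrow> (\<exists>x>0. ?ge_start s t x)" "0 \<le> s \<and> s \<le> t"
  then obtain x where "0 < x" "?ge_start s t x" by blast
  then show "BF_inf (v s t)" using BF_inf_iff_prob_ge_start[OF assms, of s t x] \<open>0 \<le> s \<and> s \<le> t\<close> by simp
qed

lemma nondecreasing_iff_prob_ge_start:
  assumes bp: "branching_process P Z k"
  shows "(\<forall>s t u x. 0 \<le> s \<and> s \<le> t \<and> t \<le> u \<and> 0 < x \<longrightarrow>
           measure (P s (ennreal x)) {\<omega> \<in> space (P s (ennreal x)). Z t \<omega> \<le> Z u \<omega>} = 1)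
    \<longleftrightarrow> (\<forall>s t x. 0 \<le> s \<and> s \<le> t \<and> 0 < x \<longrightarrow>
           measure (P s (ennreal x)) {\<omega> \<in> space (P s (ennreal x)). ennreal x \<le> Z t \<omega>} = 1)"
    (is "(\<forall>s t u x. _ \<longrightarrow> ?nondecreasing s t u x) \<longleftrightarrow> (\<forall>s t x. _ \<longrightarrow> ?ge_start s t x)")
proof (intro iffI allI impI)
  fix s t x :: real
  assume "\<forall>s t u x. 0 \<le> s \<and> s \<le> t \<and> t \<le> u \<and> 0 < x \<longrightarrow> ?nondecreasing s t u x"
    and st: "0 \<le> s \<and> s \<le> t \<and> 0 < x"
  then have "?nondecreasing s s t x" by simp
  with st show "?ge_start s t x" using ge_start_if_nondecreasing[OF bp] by simp
next
  fix s t u x :: real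
  assume "\<forall>s t x. 0 \<le> s \<and> s \<le> t \<and> 0 < x \<longrightarrow> ?ge_start s t x"
    and stu: "0 \<le> s \<and> s \<le> t \<and> t \<le> u \<and> 0 < x"
  then have "measure (k t u (ennreal y)) {..<ennreal y} = 0" if "0 < y" for y
    using prob_ge_start_iff_kernel_null_below[OF bp, of t u "ennreal y"] that by simp
  with stu show "?nondecreasing s t u x" using nondecreasing_if_kernels_null_below[OF bp] by simp
qed

theorem mainTheorem12:
  fixes P :: "real \<Rightarrow> ennreal \<Rightarrow> 'w measure"
    and Z :: "real \<Rightarrow> 'w \<Rightarrow> ennreal"
    and k :: "real \<Rightarrow> real \<Rightarrow> ennreal \<Rightarrow> ennreal measure"
    and v :: "real \<Rightarrow> real \<Rightarrow> complex \<Rightarrow> complex"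
  assumes "branching_process P Z k"
    and "laplace_exponents k v"
  shows "((\<forall>s t. 0 \<le> s \<and> s \<le> t \<longrightarrow> BF_inf (v s t))
      \<longleftrightarrow> (\<forall>s t u x. 0 \<le> s \<and> s \<le> t \<and> t \<le> u \<and> 0 < x \<longrightarrow>
             measure (P s (ennreal x)) {\<omega> \<in> space (P s (ennreal x)). Z t \<omega> \<le> Z u \<omega>} = 1))
    \<and> ((\<forall>s t. 0 \<le> s \<and> s \<le> t \<longrightarrow> BF_inf (v s t))
      \<longleftrightarrow> (\<forall>s t x. 0 \<le> s \<and> s \<le> t \<and> 0 < x \<longrightarrow>
             measure (P s (ennreal x)) {\<omega> \<in> space (P s (ennreal x)). ennreal x \<le> Z t \<omega>} = 1))
    \<and> ((\<forall>s t. 0 \<le> s \<and> s \<le> t \<longrightarrow> BF_inf (v s t))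
      \<longleftrightarrow> (\<forall>s t. 0 \<le> s \<and> s \<le> t \<longrightarrow> (\<exists>x>0.
             measure (P s (ennreal x)) {\<omega> \<in> space (P s (ennreal x)). ennreal x \<le> Z t \<omega>} = 1)))"
  using BF_inf_iff_prob_ge_start_all[OF assms] BF_inf_iff_prob_ge_start_ex[OF assms]
    nondecreasing_iff_prob_ge_start[OF assms(1)]
  by blast

end
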